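(* In the self-selection model below, assume: (i) $(\epsilon_y,\epsilon_c,\epsilon_u)$ is independent of $X$; (ii) Assumption 1: $\mathbb{E}[\epsilon_y\mid\epsilon_u]=\alpha_y\epsilon_u$ and $\mathbb{E}[\epsilon_c\mid\epsilon_u]=\alpha_c\epsilon_u$; (iii) Assumption 2: $\epsilon_u\sim\mathcal{N}(0,1)$; (iv) for all $x_i,x_j$, $\operatorname{sgn}(\psi(x_i)-\psi(x_j))=\operatorname{sgn}(\beta(x_i)-\beta(x_j))$ (as implied by full latent mediation and latent synchrony for $C$ and $U$), and there is an open interval $I$ containing $\psi(x)$ for all $x$ and a differentiable $G:I\to\mathbb{R}$ with $\beta(x)=G(\psi(x))$; (v) Assumption 3: $\alpha_y\psi>0$ for all $\psi\in I$; (vi) Assumption 4: $G'(\psi)\ge\alpha_c\big(1-\mathrm{Var}[\epsilon_u\mid\epsilon_u>-\psi]\big)$ for all $\psi\in I$. Then the confounded CAS $$\theta(x)=\mathbb{E}[Y\mid T=1,X=x]-\mathbb{E}[Y\mid T=0,X=x]$$ has a valid effect ordering interpretation: for all $x_i,x_j$, $\theta(x_i)>\theta(x_j)\iff\beta(x_i)>\beta(x_j)$.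
   Context: Self-selection model: $X$ is a random feature vector, $Y^0=\zeta(X)+\epsilon_y$, $C=\beta(X)+\epsilon_c$, $U=\psi(X)+\epsilon_u$, with functions $\zeta,\beta,\psi$ and mean-zero noise $\epsilon_y,\epsilon_c,\epsilon_u$. Treatment is self-selected, $T=\mathbf{1}\{U>0\}$, and the observed outcome is $Y=Y^0+TC$. $\beta(x)=\mathbb{E}[C\mid X=x]$ is the CATE. *)

theory Defs
  imports "HOL-Probability.Probability"
begin

definition cond_exp_event :: "'a measure \<Rightarrow> ('a \<Rightarrow> real) \<Rightarrow> ('a \<Rightarrow> bool) \<Rightarrow> real" where
  "cond_exp_event M f P =
     (\<integral>\<omega>. indicator {\<omega>\<in>space M. P \<omega>} \<omega> * f \<omega> \<partial>M) / measure M {\<omega>\<in>space M. P \<omega>}"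

definition cond_var_event :: "'a measure \<Rightarrow> ('a \<Rightarrow> real) \<Rightarrow> ('a \<Rightarrow> bool) \<Rightarrow> real" where
  "cond_var_event M f P = cond_exp_event M (\<lambda>\<omega>. (f \<omega> - cond_exp_event M f P)\<^sup>2) P"

text \<open>Self-selection model with the feature fixed at X = x:
  U = psi x + eps_u, T = 1{U > 0}, Y = (zeta x + eps_y) + T * (beta x + eps_c).\<close>
definition treat_at :: "('x \<Rightarrow> real) \<Rightarrow> ('a \<Rightarrow> real) \<Rightarrow> 'x \<Rightarrow> 'a \<Rightarrow> real" where
  "treat_at psi eu x \<omega> = (if psi x + eu \<omega> > 0 then 1 else 0)"

definition outcome_at :: "('x \<Rightarrow> real) \<Rightarrow> ('x \<Rightarrow> real) \<Rightarrow> ('x \<Rightarrow> real) \<Rightarrow>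
    ('a \<Rightarrow> real) \<Rightarrow> ('a \<Rightarrow> real) \<Rightarrow> ('a \<Rightarrow> real) \<Rightarrow> 'x \<Rightarrow> 'a \<Rightarrow> real" where
  "outcome_at zeta beta psi ey ec eu x \<omega> =
     (zeta x + ey \<omega>) + treat_at psi eu x \<omega> * (beta x + ec \<omega>)"

text \<open>Confounded CAS theta(x) = E[Y | T=1, X=x] - E[Y | T=0, X=x]; since the noise is
  independent of X, conditioning on X = x amounts to fixing the feature value x.\<close>
definition confounded_cas :: "'a measure \<Rightarrow> ('x \<Rightarrow> real) \<Rightarrow> ('x \<Rightarrow> real) \<Rightarrow> ('x \<Rightarrow> real) \<Rightarrow>
    ('a \<Rightarrow> real) \<Rightarrow> ('a \<Rightarrow> real) \<Rightarrow> ('a \<Rightarrow> real) \<Rightarrow> 'x \<Rightarrow> real" where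
  "confounded_cas M zeta beta psi ey ec eu x =
     cond_exp_event M (outcome_at zeta beta psi ey ec eu x) (\<lambda>\<omega>. treat_at psi eu x \<omega> = 1)
   - cond_exp_event M (outcome_at zeta beta psi ey ec eu x) (\<lambda>\<omega>. treat_at psi eu x \<omega> = 0)"

end

theory Submission
  imports Defs "HOL-Real_Asymp.Real_Asymp"
begin

(* With p = psi x, the treated group is the event {eps_u > -p}, of probability Phi p.  The truncated
   normal moments turn the CAS into
     theta x = beta x + alpha_c * lambda p + alpha_y * (lambda p + lambda (-p)),
   where lambda = phi / Phi is the inverse Mills ratio.  Since lambda' p = - lambda p * (p + lambda p)
   = - (1 - Var[eps_u | eps_u > -p]), Assumption 4 makes G + alpha_c * lambda nondecreasing; the slope of
   lambda p + lambda (-p) has the sign of p (this is the inequality p Phi (1 - Phi) < phi (2 Phi - 1)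
   for p > 0), so by Assumption 3 the alpha_y term is strictly increasing.  Thus theta is a strictly
   increasing function of psi x, which orders the features as beta does. *)

lemma std_normal_density_pos: "0 < std_normal_density x"
  by (simp add: normal_density_pos)

lemma std_normal_density_minus [simp]: "std_normal_density (- x) = std_normal_density x"
  by (simp add: std_normal_density_def)

lemma has_real_derivative_std_normal_density:
  "(std_normal_density has_real_derivative - x * std_normal_density x) (at x)"
  unfolding std_normal_density_def
  by (auto intro!: derivative_eq_intros simp: power2_eq_square field_simps)

lemma isCont_std_normal_density: "isCont std_normal_density x"
  using has_real_derivative_std_normal_density DERIV_isCont by blast

lemma set_integrable_std_normal_moment:
  assumes "A \<in> sets borel"
  shows "set_integrable lborel A (\<lambda>x. x ^ k * std_normal_density x)"
  unfolding set_integrable_def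
  using integrable_mult_indicator[OF _ integrable_std_normal_moment[of k]] assms
  by (simp add: mult.commute)

lemma interval_integrable_std_normal_moment:
  "interval_lebesgue_integrable lborel a b (\<lambda>x. x ^ k * std_normal_density x)"
  unfolding interval_lebesgue_integrable_def by (auto intro!: set_integrable_std_normal_moment)

lemma interval_integrable_std_normal_density:
  "interval_lebesgue_integrable lborel a b std_normal_density"
  using interval_integrable_std_normal_moment[of a b 0] by simp

lemma std_normal_tail_moment1:
  "(LBINT x=ereal a..\<infinity>. x * std_normal_density x) = std_normal_density a"
proof -
  have "(LBINT x=ereal a..\<infinity>. x * std_normal_density x) = 0 - (- std_normal_density a)"
  proof (rule interval_integral_FTC_integrable[where F = "\<lambda>x. - std_normal_density x"])
    show "((\<lambda>x. - std_normal_density x) has_vector_derivative x * std_normal_density x) (at x)" for x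
      using DERIV_minus[OF has_real_derivative_std_normal_density[of x]]
      by (simp add: has_real_derivative_iff_has_vector_derivative[symmetric])
    show "set_integrable lborel (einterval (ereal a) \<infinity>) (\<lambda>x. x * std_normal_density x)"
      using set_integrable_std_normal_moment[of "einterval a \<infinity>" 1] by simp
    show "(((\<lambda>x. - std_normal_density x) \<circ> real_of_ereal) \<longlongrightarrow> - std_normal_density a) (at_right (ereal a))"
      unfolding ereal_tendsto_simps1
      by (intro tendsto_intros isCont_tendsto_compose[OF isCont_std_normal_density] tendsto_ident_at)
    show "(((\<lambda>x. - std_normal_density x) \<circ> real_of_ereal) \<longlongrightarrow> 0) (at_left \<infinity>)"
      unfolding ereal_tendsto_simps1 std_normal_density_def by real_asymp
  qed (auto intro: continuous_intros isCont_std_normal_density)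
  then show ?thesis by simp
qed

lemma std_normal_tail_moment2:
  "(LBINT x=ereal a..\<infinity>. x\<^sup>2 * std_normal_density x)
     = (LBINT x=ereal a..\<infinity>. std_normal_density x) + a * std_normal_density a"
proof -
  have "(LBINT x=ereal a..\<infinity>. (x\<^sup>2 - 1) * std_normal_density x) = 0 - (- a * std_normal_density a)"
  proof (rule interval_integral_FTC_integrable[where F = "\<lambda>x. - x * std_normal_density x"])
    show "((\<lambda>x. - x * std_normal_density x) has_vector_derivative (x\<^sup>2 - 1) * std_normal_density x) (at x)" for x
      using DERIV_mult[OF DERIV_minus[OF DERIV_ident] has_real_derivative_std_normal_density[of x]]
      by (simp add: has_real_derivative_iff_has_vector_derivative[symmetric] power2_eq_square algebra_simps)
    show "set_integrable lborel (einterval (ereal a) \<infinity>) (\<lambda>x. (x\<^sup>2 - 1) * std_normal_density x)"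
      using set_integral_diff(1)[OF set_integrable_std_normal_moment[of _ 2] set_integrable_std_normal_moment[of _ 0]]
      by (simp add: algebra_simps)
    show "(((\<lambda>x. - x * std_normal_density x) \<circ> real_of_ereal) \<longlongrightarrow> - a * std_normal_density a) (at_right (ereal a))"
      unfolding ereal_tendsto_simps1
      by (intro tendsto_intros isCont_tendsto_compose[OF isCont_std_normal_density] tendsto_ident_at)
    show "(((\<lambda>x. - x * std_normal_density x) \<circ> real_of_ereal) \<longlongrightarrow> 0) (at_left \<infinity>)"
      unfolding ereal_tendsto_simps1 std_normal_density_def by real_asymp
  qed (auto intro: continuous_intros isCont_std_normal_density)
  moreover have "(LBINT x=ereal a..\<infinity>. (x\<^sup>2 - 1) * std_normal_density x)
      = (LBINT x=ereal a..\<infinity>. x\<^sup>2 * std_normal_density x) - (LBINT x=ereal a..\<infinity>. std_normal_density x)"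
    using interval_lebesgue_integral_diff(2)[OF interval_integrable_std_normal_moment[of _ _ 2]
        interval_integrable_std_normal_density]
    by (simp add: algebra_simps)
  ultimately show ?thesis by simp
qed

text \<open>The standard normal distribution function \<open>\<Phi>\<close>, written as the tail mass \<open>P(\<epsilon> > -p)\<close>,
  which by symmetry of the density equals \<open>P(\<epsilon> \<le> p)\<close>.\<close>
definition normal_cdf :: "real \<Rightarrow> real" where
  "normal_cdf p = (LBINT x=ereal (- p)..\<infinity>. std_normal_density x)"

lemma normal_cdf_eq_half_plus:
  "normal_cdf p = 1/2 + (LBINT x=ereal 0..ereal p. std_normal_density x)"
proof -
  have total: "(LBINT x=-\<infinity>..\<infinity>. std_normal_density x) = 1"
    by (simp add: interval_lebesgue_integral_def set_lebesgue_integral_def)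
  have "(LBINT x=-\<infinity>..ereal 0. std_normal_density x) + (LBINT x=ereal 0..\<infinity>. std_normal_density x)
      = (LBINT x=-\<infinity>..\<infinity>. std_normal_density x)"
    by (rule interval_integral_sum) (rule interval_integrable_std_normal_density)
  moreover have "(LBINT x=-\<infinity>..ereal 0. std_normal_density x) = (LBINT x=ereal 0..\<infinity>. std_normal_density x)"
    using interval_integral_reflect[of "-\<infinity>" "ereal 0" std_normal_density] by simp
  ultimately have half: "(LBINT x=ereal 0..\<infinity>. std_normal_density x) = 1/2"
    using total by simp
  have "(LBINT x=ereal (- p)..ereal 0. std_normal_density x) + (LBINT x=ereal 0..\<infinity>. std_normal_density x)
      = normal_cdf p"
    unfolding normal_cdf_def
    by (rule interval_integral_sum) (rule interval_integrable_std_normal_density)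
  moreover have "(LBINT x=ereal (- p)..ereal 0. std_normal_density x)
      = (LBINT x=ereal 0..ereal p. std_normal_density x)"
    using interval_integral_reflect[of "ereal (- p)" "ereal 0" std_normal_density] by simp
  ultimately show ?thesis
    using half by simp
qed

lemma normal_cdf_zero: "normal_cdf 0 = 1/2"
  by (simp add: normal_cdf_eq_half_plus zero_ereal_def)

lemma normal_cdf_minus: "normal_cdf (- p) = 1 - normal_cdf p"
  using interval_integral_reflect[of "ereal 0" "ereal p" std_normal_density]
        interval_integral_endpoints_reverse[of "ereal (- p)" "ereal 0" std_normal_density]
  by (simp add: normal_cdf_eq_half_plus zero_ereal_def)

lemma has_real_derivative_normal_cdf:
  "(normal_cdf has_real_derivative std_normal_density p) (at p)"
proof -
  have "((\<lambda>u. LBINT x=ereal 0..ereal u. std_normal_density x) has_vector_derivative std_normal_density p)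
      (at p within {-\<bar>p\<bar>-1..\<bar>p\<bar>+1})"
    by (rule interval_integral_FTC2)
       (auto intro: continuous_at_imp_continuous_on isCont_std_normal_density)
  moreover have "at p within {-\<bar>p\<bar>-1..\<bar>p\<bar>+1} = at p"
    by (rule at_within_Icc_at) auto
  ultimately have "((\<lambda>u. LBINT x=ereal 0..ereal u. std_normal_density x)
      has_real_derivative std_normal_density p) (at p)"
    by (simp add: has_real_derivative_iff_has_vector_derivative)
  then show ?thesis
    unfolding normal_cdf_eq_half_plus[abs_def] by (auto intro: derivative_eq_intros)
qed

lemma strict_mono_normal_cdf: "strict_mono normal_cdf"
proof (rule strict_monoI)
  fix a b :: real assume "a < b"
  then show "normal_cdf a < normal_cdf b"
    using has_real_derivative_normal_cdf std_normal_density_pos by (blast intro: DERIV_pos_imp_increasing)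
qed

lemma normal_cdf_nonneg: "0 \<le> normal_cdf p"
  unfolding normal_cdf_def interval_lebesgue_integral_def set_lebesgue_integral_def
  by (simp add: Bochner_Integration.integral_nonneg)

lemma normal_cdf_pos: "0 < normal_cdf p"
  using normal_cdf_nonneg[of "p - 1"] strict_mono_normal_cdf[THEN strict_monoD, of "p - 1" p] by simp

lemma normal_cdf_less_1: "normal_cdf p < 1"
  using normal_cdf_pos[of "- p"] by (simp add: normal_cdf_minus)

lemma normal_cdf_tail_le:
  assumes "p > 0"
  shows "1 - normal_cdf p \<le> std_normal_density p / p"
proof -
  have "1 - normal_cdf p = (LINT x:{p<..}|lborel. std_normal_density x)"
    using normal_cdf_minus[of p] by (simp add: normal_cdf_def interval_lebesgue_integral_def)
  then have "p * (1 - normal_cdf p) = (LINT x:{p<..}|lborel. p * std_normal_density x)"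
    by (simp add: set_lebesgue_integral_def ac_simps)
  also have "\<dots> \<le> (LINT x:{p<..}|lborel. x * std_normal_density x)"
    using set_integrable_std_normal_moment[of "{p<..}" 0] set_integrable_std_normal_moment[of "{p<..}" 1]
    by (intro set_integral_mono)
       (auto intro: set_integrable_mult_right mult_right_mono less_imp_le)
  also have "\<dots> = std_normal_density p"
    using std_normal_tail_moment1[of p]
    by (simp add: interval_lebesgue_integral_def)
  finally show ?thesis
    using assms by (simp add: field_simps)
qed

lemma tendsto_normal_cdf_at_top: "(normal_cdf \<longlongrightarrow> 1) at_top"
proof -
  have "((\<lambda>p. 1 - normal_cdf p) \<longlongrightarrow> 0) at_top"
  proof (rule tendsto_sandwich)
    show "\<forall>\<^sub>F p in at_top. 0 \<le> 1 - normal_cdf p"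
      using normal_cdf_less_1 by (simp add: less_imp_le)
    show "\<forall>\<^sub>F p in at_top. 1 - normal_cdf p \<le> std_normal_density p / p"
      using eventually_gt_at_top[of 0] by eventually_elim (rule normal_cdf_tail_le)
    show "((\<lambda>p. std_normal_density p / p) \<longlongrightarrow> 0) at_top"
      unfolding std_normal_density_def by real_asymp
  qed simp
  from tendsto_diff[OF tendsto_const this, of 1] show ?thesis
    by simp
qed

lemma normal_cdf_gt_density:
  assumes "p > 0"
  shows "2 * p * std_normal_density p < 2 * normal_cdf p - 1"
proof -
  define S where "S p = 2 * normal_cdf p - 1 - 2 * p * std_normal_density p" for p
  have "(S has_real_derivative 2 * x\<^sup>2 * std_normal_density x) (at x)" for x
    unfolding S_def[abs_def]
    by (rule DERIV_cong[OF DERIV_diff[OF DERIV_diff[OF DERIV_cmult[OF has_real_derivative_normal_cdf]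
          DERIV_const] DERIV_mult[OF DERIV_cmult[OF DERIV_ident] has_real_derivative_std_normal_density]]])
       (simp add: power2_eq_square algebra_simps)
  then obtain z where z: "0 < z" "S p - S 0 = p * (2 * z\<^sup>2 * std_normal_density z)"
    using MVT2[of 0 p S "\<lambda>x. 2 * x\<^sup>2 * std_normal_density x"] assms by auto
  have "S 0 = 0"
    by (simp add: S_def normal_cdf_zero)
  moreover have "p * (2 * z\<^sup>2 * std_normal_density z) > 0"
    using z assms std_normal_density_pos[of z] by simp
  ultimately show ?thesis
    using z(2) unfolding S_def by linarith
qed

lemma std_normal_density_normal_cdf_ineq:
  assumes "p > 0"
  shows "p * normal_cdf p * (1 - normal_cdf p) < std_normal_density p * (2 * normal_cdf p - 1)"
proof -
  define f where
    "f p = std_normal_density p * (2 * normal_cdf p - 1) / p - normal_cdf p * (1 - normal_cdf p)" for p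
  have f_deriv: "(f has_real_derivative
      - std_normal_density x * (2 * normal_cdf x - 1 - 2 * x * std_normal_density x) / x\<^sup>2) (at x)"
    if "x > 0" for x
  proof -
    note d = DERIV_diff[OF DERIV_divide[OF DERIV_mult[OF has_real_derivative_std_normal_density
          DERIV_diff[OF DERIV_cmult[OF has_real_derivative_normal_cdf] DERIV_const]] DERIV_ident]
        DERIV_mult[OF has_real_derivative_normal_cdf DERIV_diff[OF DERIV_const has_real_derivative_normal_cdf]]]
    show ?thesis
      unfolding f_def[abs_def]
      by (rule DERIV_cong[OF d]) (use that in \<open>simp_all add: power2_eq_square field_simps\<close>)
  qed
  have f_decreasing: "f b < f a" if "0 < a" "a < b" for a b
  proof (rule DERIV_neg_imp_decreasing[OF \<open>a < b\<close>])
    fix x assume "a \<le> x" "x \<le> b"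
    with that have "x > 0" by simp
    then have "- std_normal_density x * (2 * normal_cdf x - 1 - 2 * x * std_normal_density x) / x\<^sup>2 < 0"
      using normal_cdf_gt_density[of x] std_normal_density_pos[of x]
      by (simp add: divide_neg_pos mult_pos_pos)
    with f_deriv[OF \<open>x > 0\<close>] show "\<exists>y. (f has_real_derivative y) (at x) \<and> y < 0" by blast
  qed
  have f_lim: "(f \<longlongrightarrow> 0) at_top"
  proof -
    have "((\<lambda>p. std_normal_density p / p) \<longlongrightarrow> 0) at_top"
      unfolding std_normal_density_def by real_asymp
    then have "((\<lambda>p. std_normal_density p / p * (2 * normal_cdf p - 1) - normal_cdf p * (1 - normal_cdf p))
        \<longlongrightarrow> 0 * (2 * 1 - 1) - 1 * (1 - 1)) at_top"
      by (intro tendsto_intros tendsto_normal_cdf_at_top)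
    then show ?thesis
      unfolding f_def by simp
  qed
  have "f (p + 1) \<ge> 0"
  proof (rule tendsto_upperbound[OF f_lim])
    show "\<forall>\<^sub>F x in at_top. f x \<le> f (p + 1)"
      using eventually_gt_at_top[of "p + 1"]
      by eventually_elim (use f_decreasing assms in \<open>auto intro: less_imp_le\<close>)
  qed simp
  moreover have "f p > f (p + 1)"
    using f_decreasing assms by simp
  ultimately have "f p > 0" by simp
  then show ?thesis
    using assms by (simp add: f_def field_simps)
qed

definition inv_mills :: "real \<Rightarrow> real" where
  "inv_mills p = std_normal_density p / normal_cdf p"

lemma has_real_derivative_inv_mills:
  "(inv_mills has_real_derivative - inv_mills p * (p + inv_mills p)) (at p)"
proof -
  have "((\<lambda>p. std_normal_density p / normal_cdf p) has_real_derivative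
      (- p * std_normal_density p * normal_cdf p - std_normal_density p * std_normal_density p)
        / (normal_cdf p * normal_cdf p)) (at p)"
    using normal_cdf_pos[of p]
    by (intro DERIV_divide has_real_derivative_std_normal_density has_real_derivative_normal_cdf) simp
  moreover have "(- p * std_normal_density p * normal_cdf p - std_normal_density p * std_normal_density p)
        / (normal_cdf p * normal_cdf p) = - inv_mills p * (p + inv_mills p)"
    using normal_cdf_pos[of p] by (simp add: inv_mills_def field_simps)
  ultimately show ?thesis
    by (simp add: inv_mills_def[abs_def])
qed

lemma inv_mills_reflect_slope_pos:
  assumes "p > 0"
  shows "0 < - inv_mills p * (p + inv_mills p) + inv_mills (- p) * (inv_mills (- p) - p)"
proof -
  define d q r where "d = std_normal_density p" and "q = normal_cdf p" and "r = normal_cdf (- p)"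
  have qr: "q > 0" "r > 0" "q + r = 1"
    using normal_cdf_pos[of p] normal_cdf_pos[of "- p"] normal_cdf_minus[of p]
    by (simp_all add: q_def r_def)
  have "- inv_mills p * (p + inv_mills p) + inv_mills (- p) * (inv_mills (- p) - p)
      = - (d / q) * (p + d / q) + (d / r) * (d / r - p)"
    by (simp add: inv_mills_def d_def q_def r_def)
  also have "\<dots> = (d * d * (q - r) * (q + r) - d * p * q * r * (q + r)) / (q * r)\<^sup>2"
    using qr(1,2) by (simp add: field_simps power2_eq_square)
  also have "\<dots> = d * (d * (q - r) - p * q * r) / (q * r)\<^sup>2"
    unfolding \<open>q + r = 1\<close> by (simp add: algebra_simps)
  finally have slope: "- inv_mills p * (p + inv_mills p) + inv_mills (- p) * (inv_mills (- p) - p)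
      = d * (d * (q - r) - p * q * r) / (q * r)\<^sup>2" .
  have "p * q * r < d * (q - r)"
    using std_normal_density_normal_cdf_ineq[OF assms] by (simp add: d_def q_def r_def normal_cdf_minus)
  then show ?thesis
    unfolding slope using qr std_normal_density_pos[of p] by (simp add: d_def)
qed

lemma inv_mills_reflect_slope_sign:
  assumes "p \<noteq> 0"
  shows "0 < p * (- inv_mills p * (p + inv_mills p) + inv_mills (- p) * (inv_mills (- p) - p))"
proof (cases "p > 0")
  case True
  then show ?thesis
    using inv_mills_reflect_slope_pos by simp
next
  case False
  with assms have "- p > 0" by simp
  from inv_mills_reflect_slope_pos[OF this]
  have "- inv_mills p * (p + inv_mills p) + inv_mills (- p) * (inv_mills (- p) - p) < 0"
    by (simp add: algebra_simps)
  with False assms show ?thesis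
    by (simp add: mult_neg_neg)
qed

definition cas_profile :: "(real \<Rightarrow> real) \<Rightarrow> real \<Rightarrow> real \<Rightarrow> real \<Rightarrow> real" where
  "cas_profile G a_y a_c p = G p + a_c * inv_mills p + a_y * (inv_mills p + inv_mills (- p))"

lemma cas_profile_strict_mono_on:
  assumes I: "is_interval I"
    and G_diff: "\<forall>p\<in>I. G differentiable (at p)"
    and sign: "\<forall>p\<in>I. a_y * p > 0"
    and slope: "\<forall>p\<in>I. deriv G p \<ge> a_c * (inv_mills p * (p + inv_mills p))"
  shows "strict_mono_on I (cas_profile G a_y a_c)"
proof (rule strict_mono_onI)
  fix a b assume ab: "a \<in> I" "b \<in> I" "a < b"
  show "cas_profile G a_y a_c a < cas_profile G a_y a_c b"
  proof (rule DERIV_pos_imp_increasing[OF \<open>a < b\<close>])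
    fix x assume "a \<le> x" "x \<le> b"
    with ab I have x: "x \<in> I"
      unfolding is_interval_1 by blast
    define D where "D = - inv_mills x * (x + inv_mills x) + inv_mills (- x) * (inv_mills (- x) - x)"
    have G_deriv: "(G has_real_derivative deriv G x) (at x)"
      using G_diff x DERIV_deriv_iff_real_differentiable by blast
    have profile_deriv: "(cas_profile G a_y a_c has_real_derivative
        (deriv G x + a_c * (- inv_mills x * (x + inv_mills x))) + a_y * D) (at x)"
    proof -
      have "((\<lambda>p. inv_mills (- p)) has_real_derivative
          - inv_mills (- x) * (- x + inv_mills (- x)) * - 1) (at x)"
        by (rule DERIV_chain2[OF has_real_derivative_inv_mills]) (auto intro!: derivative_eq_intros)
      then show ?thesis
        unfolding cas_profile_def[abs_def] D_def
        by (intro DERIV_add DERIV_cmult G_deriv has_real_derivative_inv_mills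
            | simp add: algebra_simps)+
    qed
    have "deriv G x + a_c * (- inv_mills x * (x + inv_mills x)) \<ge> 0"
      using slope x by simp
    moreover have "a_y * D > 0"
    proof -
      have "0 < a_y * x" "x \<noteq> 0"
        using sign x by auto
      have "0 < (a_y * x) * (x * D)"
        unfolding D_def
        using \<open>0 < a_y * x\<close> inv_mills_reflect_slope_sign[OF \<open>x \<noteq> 0\<close>]
        by (rule mult_pos_pos)
      also have "(a_y * x) * (x * D) = (a_y * D) * (x * x)"
        by (simp only: ac_simps)
      finally show ?thesis
        by (simp add: zero_less_mult_iff)
    qed
    ultimately show "\<exists>y. (cas_profile G a_y a_c has_real_derivative y) (at x) \<and> 0 < y"
      using profile_deriv by (intro exI[of _ "_ + a_y * D"] conjI) auto
  qed
qed

lemma (in prob_space) cond_var_event_eq: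
  assumes S: "{\<omega>\<in>space M. P \<omega>} \<in> events" "prob {\<omega>\<in>space M. P \<omega>} > 0"
    and f: "integrable M f" "integrable M (\<lambda>\<omega>. (f \<omega>)\<^sup>2)"
  shows "cond_var_event M f P = cond_exp_event M (\<lambda>\<omega>. (f \<omega>)\<^sup>2) P - (cond_exp_event M f P)\<^sup>2"
proof -
  define S where "S = {\<omega>\<in>space M. P \<omega>}"
  define c where "c = cond_exp_event M f P"
  have c: "c = (\<integral>\<omega>. indicator S \<omega> * f \<omega> \<partial>M) / prob S"
    by (simp add: c_def cond_exp_event_def S_def)
  have int: "integrable M (\<lambda>\<omega>. indicator S \<omega> * (f \<omega>)\<^sup>2)" "integrable M (\<lambda>\<omega>. indicator S \<omega> * f \<omega>)"
    "integrable M (indicator S :: 'a \<Rightarrow> real)"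
    using integrable_mult_indicator[OF S(1) f(2)] integrable_mult_indicator[OF S(1) f(1)]
      integrable_mult_indicator[OF S(1) integrable_const[of "1::real"]]
    by (simp_all add: S_def)
  have "(\<integral>\<omega>. indicator S \<omega> * (f \<omega> - c)\<^sup>2 \<partial>M)
      = (\<integral>\<omega>. indicator S \<omega> * (f \<omega>)\<^sup>2 - 2 * c * (indicator S \<omega> * f \<omega>) + c\<^sup>2 * indicator S \<omega> \<partial>M)"
    by (rule Bochner_Integration.integral_cong) (auto simp: power2_eq_square algebra_simps)
  also have "\<dots> = (\<integral>\<omega>. indicator S \<omega> * (f \<omega>)\<^sup>2 \<partial>M) - 2 * c * (\<integral>\<omega>. indicator S \<omega> * f \<omega> \<partial>M)
      + c\<^sup>2 * prob S"
    using int S by (simp add: S_def)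
  finally have centered: "(\<integral>\<omega>. indicator S \<omega> * (f \<omega> - c)\<^sup>2 \<partial>M)
      = (\<integral>\<omega>. indicator S \<omega> * (f \<omega>)\<^sup>2 \<partial>M) - c\<^sup>2 * prob S"
    using S by (simp add: c S_def power2_eq_square)
  have "cond_var_event M f P = (\<integral>\<omega>. indicator S \<omega> * (f \<omega> - c)\<^sup>2 \<partial>M) / prob S"
    unfolding cond_var_event_def unfolding c_def[symmetric] unfolding cond_exp_event_def S_def ..
  also have "\<dots> = (\<integral>\<omega>. indicator S \<omega> * (f \<omega>)\<^sup>2 \<partial>M) / prob S - c\<^sup>2"
    unfolding centered using S by (simp add: S_def[symmetric] field_simps)
  finally show ?thesis
    unfolding c_def cond_exp_event_def S_def .
qed

lemma (in prob_space) integral_indicator_linear_real_cond_exp: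
  fixes u e :: "'a \<Rightarrow> real"
  assumes u [measurable]: "u \<in> borel_measurable M"
    and e: "integrable M e"
    and linear: "AE \<omega> in M. real_cond_exp M (vimage_algebra (space M) u borel) e \<omega> = \<alpha> * u \<omega>"
    and A: "A \<in> sets (vimage_algebra (space M) u borel)"
  shows "(\<integral>\<omega>. indicator A \<omega> * e \<omega> \<partial>M) = \<alpha> * (\<integral>\<omega>. indicator A \<omega> * u \<omega> \<partial>M)"
proof -
  have "subalgebra M (vimage_algebra (space M) u borel)"
    unfolding subalgebra_def using measurable_iff_sets[THEN iffD1, OF u] by auto
  then interpret finite_measure_subalgebra M "vimage_algebra (space M) u borel"
    by unfold_locales
  have [measurable]: "A \<in> sets M"
    using A subalg by (auto simp: subalgebra_def)
  have "(\<integral>\<omega>. indicator A \<omega> * e \<omega> \<partial>M)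
      = (\<integral>\<omega>. indicator A \<omega> * real_cond_exp M (vimage_algebra (space M) u borel) e \<omega> \<partial>M)"
    using real_cond_exp_intA[OF e A] by (simp add: set_lebesgue_integral_def)
  also have "\<dots> = (\<integral>\<omega>. indicator A \<omega> * (\<alpha> * u \<omega>) \<partial>M)"
    by (rule integral_cong_AE) (use linear in \<open>auto intro: borel_measurable_cond_exp2\<close>)
  finally show ?thesis
    by (simp add: ac_simps)
qed

locale std_normal_noise = prob_space M for M :: "'a measure" +
  fixes eu :: "'a \<Rightarrow> real"
  assumes distributed_eu: "distributed M lborel eu std_normal_density"
begin

lemma borel_measurable_eu [measurable]: "eu \<in> borel_measurable M"
  using distributed_measurable[OF distributed_eu] by simp

lemma integrable_eu_power: "integrable M (\<lambda>\<omega>. (eu \<omega>) ^ k)"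
  using distributed_integrable[OF distributed_eu, of "\<lambda>x. x ^ k"] integrable_std_normal_moment[of k]
  by simp

lemma integral_tail:
  assumes [measurable]: "h \<in> borel_measurable borel"
  shows "(\<integral>\<omega>. indicator {\<omega>\<in>space M. eu \<omega> > a} \<omega> * h (eu \<omega>) \<partial>M)
    = (LBINT x=ereal a..\<infinity>. h x * std_normal_density x)"
proof -
  have "(\<integral>\<omega>. indicator {\<omega>\<in>space M. eu \<omega> > a} \<omega> * h (eu \<omega>) \<partial>M)
      = (\<integral>\<omega>. indicator {a<..} (eu \<omega>) * h (eu \<omega>) \<partial>M)"
    by (rule Bochner_Integration.integral_cong) (auto simp: indicator_def)
  also have "\<dots> = (\<integral>x. std_normal_density x * (indicator {a<..} x * h x) \<partial>lborel)"
    by (rule distributed_integral[OF distributed_eu, symmetric]) auto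
  finally show ?thesis
    by (simp add: interval_lebesgue_integral_def set_lebesgue_integral_def ac_simps)
qed

lemma prob_tail: "prob {\<omega>\<in>space M. eu \<omega> > - p} = normal_cdf p"
  using integral_tail[of "\<lambda>_. 1" "- p"] by (simp add: normal_cdf_def)

lemma integral_tail_eu: "(\<integral>\<omega>. indicator {\<omega>\<in>space M. eu \<omega> > - p} \<omega> * eu \<omega> \<partial>M) = std_normal_density p"
  using integral_tail[of "\<lambda>x. x" "- p"] std_normal_tail_moment1[of "- p"] by simp

lemma integral_tail_eu_sq:
  "(\<integral>\<omega>. indicator {\<omega>\<in>space M. eu \<omega> > - p} \<omega> * (eu \<omega>)\<^sup>2 \<partial>M) = normal_cdf p - p * std_normal_density p"
  using integral_tail[of "\<lambda>x. x\<^sup>2" "- p"] std_normal_tail_moment2[of "- p"] by (simp add: normal_cdf_def)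

lemma cond_exp_tail: "cond_exp_event M eu (\<lambda>\<omega>. eu \<omega> > - p) = inv_mills p"
  by (simp add: cond_exp_event_def integral_tail_eu prob_tail inv_mills_def)

lemma cond_var_tail: "cond_var_event M eu (\<lambda>\<omega>. eu \<omega> > - p) = 1 - inv_mills p * (p + inv_mills p)"
proof -
  have "cond_exp_event M (\<lambda>\<omega>. (eu \<omega>)\<^sup>2) (\<lambda>\<omega>. eu \<omega> > - p) = 1 - p * inv_mills p"
    using normal_cdf_pos[of p]
    by (simp add: cond_exp_event_def integral_tail_eu_sq prob_tail inv_mills_def diff_divide_distrib)
  moreover have "cond_var_event M eu (\<lambda>\<omega>. eu \<omega> > - p)
      = cond_exp_event M (\<lambda>\<omega>. (eu \<omega>)\<^sup>2) (\<lambda>\<omega>. eu \<omega> > - p) - (cond_exp_event M eu (\<lambda>\<omega>. eu \<omega> > - p))\<^sup>2"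
    using integrable_eu_power[of 1] integrable_eu_power[of 2] normal_cdf_pos[of p]
    by (intro cond_var_event_eq) (simp_all add: prob_tail)
  ultimately show ?thesis
    by (simp add: cond_exp_tail power2_eq_square algebra_simps)
qed

lemma integral_tail_linear_noise:
  assumes e: "integrable M e"
    and linear: "AE \<omega> in M. real_cond_exp M (vimage_algebra (space M) eu borel) e \<omega> = \<alpha> * eu \<omega>"
  shows "(\<integral>\<omega>. indicator {\<omega>\<in>space M. eu \<omega> > - p} \<omega> * e \<omega> \<partial>M) = \<alpha> * std_normal_density p"
proof -
  have "eu -` {- p<..} \<inter> space M \<in> sets (vimage_algebra (space M) eu borel)"
    by (rule in_vimage_algebra) simp
  moreover have "eu -` {- p<..} \<inter> space M = {\<omega>\<in>space M. eu \<omega> > - p}"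
    by auto
  ultimately show ?thesis
    using integral_indicator_linear_real_cond_exp[OF borel_measurable_eu e linear] integral_tail_eu
    by simp
qed

lemma confounded_cas_eq:
  assumes ey: "integrable M ey" and ec: "integrable M ec" and ey_mean: "(\<integral>\<omega>. ey \<omega> \<partial>M) = 0"
    and linear_y: "AE \<omega> in M. real_cond_exp M (vimage_algebra (space M) eu borel) ey \<omega> = a_y * eu \<omega>"
    and linear_c: "AE \<omega> in M. real_cond_exp M (vimage_algebra (space M) eu borel) ec \<omega> = a_c * eu \<omega>"
  shows "confounded_cas M zeta beta psi ey ec eu x
    = beta x + a_c * inv_mills (psi x) + a_y * (inv_mills (psi x) + inv_mills (- psi x))"
proof -
  define p where "p = psi x"
  define S where "S = {\<omega>\<in>space M. eu \<omega> > - p}"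
  define Y where "Y = outcome_at zeta beta psi ey ec eu x"
  have S: "S \<in> events"
    unfolding S_def by measurable
  have S_space: "S \<inter> space M = S"
    by (auto simp: S_def)
  have q: "prob S = normal_cdf p" "prob (space M - S) = normal_cdf (- p)"
    using prob_tail[of p] prob_compl[OF S] by (simp_all add: S_def normal_cdf_minus)
  have treated: "{\<omega>\<in>space M. treat_at psi eu x \<omega> = 1} = S"
    and untreated: "{\<omega>\<in>space M. treat_at psi eu x \<omega> = 0} = space M - S"
    by (auto simp: S_def treat_at_def p_def)
  have int: "integrable M (indicator S :: 'a \<Rightarrow> real)" "integrable M (indicator (space M - S) :: 'a \<Rightarrow> real)"
      "integrable M (\<lambda>\<omega>. indicator S \<omega> * ey \<omega>)" "integrable M (\<lambda>\<omega>. indicator S \<omega> * ec \<omega>)"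
    using integrable_mult_indicator[OF S integrable_const[of "1::real"]]
      integrable_mult_indicator[OF sets.compl_sets[OF S] integrable_const[of "1::real"]]
      integrable_mult_indicator[OF S ey] integrable_mult_indicator[OF S ec]
    by simp_all
  have "(\<integral>\<omega>. indicator S \<omega> * Y \<omega> \<partial>M)
      = (\<integral>\<omega>. (zeta x + beta x) * indicator S \<omega> + indicator S \<omega> * ey \<omega> + indicator S \<omega> * ec \<omega> \<partial>M)"
    by (rule Bochner_Integration.integral_cong)
       (auto simp: Y_def S_def outcome_at_def treat_at_def p_def indicator_def algebra_simps)
  also have "\<dots> = (zeta x + beta x) * normal_cdf p + (a_y + a_c) * std_normal_density p"
    using int integral_tail_linear_noise[OF ey linear_y, of p, folded S_def]
      integral_tail_linear_noise[OF ec linear_c, of p, folded S_def]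
    by (simp add: q S_space algebra_simps)
  finally have treated_mean: "(\<integral>\<omega>. indicator S \<omega> * Y \<omega> \<partial>M)
      = (zeta x + beta x) * normal_cdf p + (a_y + a_c) * std_normal_density p" .
  have "(\<integral>\<omega>. indicator (space M - S) \<omega> * Y \<omega> \<partial>M)
      = (\<integral>\<omega>. zeta x * indicator (space M - S) \<omega> + (ey \<omega> - indicator S \<omega> * ey \<omega>) \<partial>M)"
    by (rule Bochner_Integration.integral_cong)
       (auto simp: Y_def S_def outcome_at_def treat_at_def p_def indicator_def algebra_simps)
  also have "\<dots> = zeta x * normal_cdf (- p) - a_y * std_normal_density p"
    using int ey ey_mean integral_tail_linear_noise[OF ey linear_y, of p, folded S_def] q sets.compl_sets[OF S]
    by simp
  finally have untreated_mean: "(\<integral>\<omega>. indicator (space M - S) \<omega> * Y \<omega> \<partial>M)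
      = zeta x * normal_cdf (- p) - a_y * std_normal_density p" .
  have "confounded_cas M zeta beta psi ey ec eu x
      = ((zeta x + beta x) * normal_cdf p + (a_y + a_c) * std_normal_density p) / normal_cdf p
        - (zeta x * normal_cdf (- p) - a_y * std_normal_density p) / normal_cdf (- p)"
    unfolding confounded_cas_def cond_exp_event_def Y_def[symmetric] treated untreated
      treated_mean untreated_mean q ..
  also have "\<dots> = beta x + a_c * inv_mills p + a_y * (inv_mills p + inv_mills (- p))"
    using normal_cdf_pos[of p] normal_cdf_pos[of "- p"]
    by (simp add: inv_mills_def field_simps)
  finally show ?thesis
    by (simp add: p_def)
qed

end

theorem mainTheorem11:
  fixes M :: "'a measure" and Mx :: "'x measure" and X :: "'a \<Rightarrow> 'x"
    and zeta beta psi :: "'x \<Rightarrow> real"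
    and ey ec eu :: "'a \<Rightarrow> real"
    and alpha_y alpha_c :: real and I :: "real set" and G :: "real \<Rightarrow> real"
  assumes P: "prob_space M"
    and X_meas: "X \<in> measurable M Mx"
    and ey_meas: "ey \<in> borel_measurable M" and ec_meas: "ec \<in> borel_measurable M"
    and eu_meas: "eu \<in> borel_measurable M"
    and ey_int: "integrable M ey" and ec_int: "integrable M ec" and eu_int: "integrable M eu"
    and ey_mean: "(\<integral>\<omega>. ey \<omega> \<partial>M) = 0" and ec_mean: "(\<integral>\<omega>. ec \<omega> \<partial>M) = 0"
    and eu_mean: "(\<integral>\<omega>. eu \<omega> \<partial>M) = 0"
    and indep: "prob_space.indep_set M
        (sigma_sets (space M) {(\<lambda>\<omega>. (ey \<omega>, ec \<omega>, eu \<omega>)) -` A \<inter> space M | A. A \<in> sets (borel :: (real \<times> real \<times> real) measure)})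
        (sigma_sets (space M) {X -` A \<inter> space M | A. A \<in> sets Mx})"
    and A1y: "AE \<omega> in M. real_cond_exp M (vimage_algebra (space M) eu borel) ey \<omega> = alpha_y * eu \<omega>"
    and A1c: "AE \<omega> in M. real_cond_exp M (vimage_algebra (space M) eu borel) ec \<omega> = alpha_c * eu \<omega>"
    and A2: "distributed M lborel eu std_normal_density"
    and sgn_sync: "\<forall>xi xj. sgn (psi xi - psi xj) = sgn (beta xi - beta xj)"
    and I_open: "open I" and I_interval: "is_interval I"
    and psi_I: "\<forall>x. psi x \<in> I"
    and G_diff: "\<forall>p\<in>I. G differentiable (at p)"
    and beta_G: "\<forall>x. beta x = G (psi x)"
    and A3: "\<forall>p\<in>I. alpha_y * p > 0"
    and A4: "\<forall>p\<in>I. deriv G p \<ge> alpha_c * (1 - cond_var_event M eu (\<lambda>\<omega>. eu \<omega> > - p))"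
  shows "\<forall>xi xj. confounded_cas M zeta beta psi ey ec eu xi > confounded_cas M zeta beta psi ey ec eu xj
                 \<longleftrightarrow> beta xi > beta xj"
proof -
  \<comment> \<open>Independence and the hypotheses on \<open>X\<close> are already built into \<open>confounded_cas\<close>,
      which fixes the feature value.\<close>
  interpret std_normal_noise M eu
    by (intro std_normal_noise.intro std_normal_noise_axioms.intro P A2)
  have cas: "confounded_cas M zeta beta psi ey ec eu x = cas_profile G alpha_y alpha_c (psi x)" for x
    unfolding cas_profile_def beta_G[rule_format, symmetric]
    by (rule confounded_cas_eq[OF ey_int ec_int ey_mean A1y A1c])
  have "strict_mono_on I (cas_profile G alpha_y alpha_c)"
    by (rule cas_profile_strict_mono_on[OF I_interval G_diff A3]) (use A4 in \<open>simp add: cond_var_tail\<close>)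
  then have "confounded_cas M zeta beta psi ey ec eu xi > confounded_cas M zeta beta psi ey ec eu xj
      \<longleftrightarrow> psi xi > psi xj" for xi xj
    unfolding cas using psi_I by (simp add: strict_mono_on_less)
  moreover have "psi xi > psi xj \<longleftrightarrow> beta xi > beta xj" for xi xj
    using sgn_sync[rule_format, of xi xj] by (metis diff_gt_0_iff_gt sgn_pos sgn_1_pos)
  ultimately show ?thesis
    by simp
qed

end
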